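(* Let $X$ and $Y$ be locally compact Hausdorff spaces, $p:X\to Y$ a perfect irreducible map, $f:X'\to X$ and $g:Y'\to Y$ continuous maps of topological spaces, and $p':X'\to Y'$ a closed irreducible map with $p\circ f=g\circ p'$. Then every $G\in\mathrm{RC}(X)$ satisfies $$\mathrm{cl}(g^{-1}(\mathrm{int}(p(G))))=\bigvee\{p'(\mathrm{cl}(f^{-1}(\mathrm{int}(H))))\mid H\in\mathrm{CR}(X),\ p(H)\subseteq\mathrm{int}(p(G))\},$$ the join being taken in the Boolean algebra $\mathrm{RC}(Y')$.
   Context: For a space $X$, $\mathrm{RC}(X)$ is the complete Boolean algebra of regular closed sets ($F=\mathrm{cl}(\mathrm{int}F)$), in which $\bigvee_i F_i=\mathrm{cl}(\bigcup_i F_i)$; $\mathrm{CR}(X)$ is the set of compact regular closed subsets. A perfect map is a continuous closed map with compact fibres; an irreducible map is a continuous surjection such that no proper closed subset of the domain is mapped onto the codomain. *)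

theory Defs
  imports "HOL-Analysis.Analysis"
begin

definition irreducible_map :: "'a topology \<Rightarrow> 'b topology \<Rightarrow> ('a \<Rightarrow> 'b) \<Rightarrow> bool" where
  "irreducible_map X Y f \<longleftrightarrow>
     continuous_map X Y f \<and> f ` topspace X = topspace Y \<and>
     (\<forall>C. closedin X C \<and> C \<noteq> topspace X \<longrightarrow> f ` C \<noteq> topspace Y)"

definition regular_closed_in :: "'a topology \<Rightarrow> 'a set \<Rightarrow> bool" where
  "regular_closed_in X F \<longleftrightarrow> X closure_of (X interior_of F) = F"

definition compact_regular_closed_in :: "'a topology \<Rightarrow> 'a set \<Rightarrow> bool" where
  "compact_regular_closed_in X H \<longleftrightarrow> regular_closed_in X H \<and> compactin X H"

end

theory Submission
  imports Defs
begin

text \<open>The identity holds already before taking closures, with the join replaced by a plain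
union. If \<open>y = p' x\<close> and \<open>g y \<in> U\<close>, where \<open>U = int (p G)\<close>, then \<open>f x\<close> lies in the open set
\<open>p\<^sup>-\<^sup>1 U\<close>, and local compactness provides a compact regular closed \<open>H \<subseteq> p\<^sup>-\<^sup>1 U\<close> with
\<open>f x \<in> int H\<close>. Conversely the closure of \<open>f\<^sup>-\<^sup>1 (int H)\<close> lies in the closed set \<open>f\<^sup>-\<^sup>1 H\<close>,
which \<open>p \<circ> f = g \<circ> p'\<close> carries into \<open>g\<^sup>-\<^sup>1 U\<close>.\<close>

lemma regular_closed_in_closure_of_open:
  assumes "openin X N"
  shows "regular_closed_in X (X closure_of N)"
proof -
  have "N \<subseteq> X interior_of (X closure_of N)"
    using assms by (meson closure_of_subset interior_of_maximal openin_subset)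
  then have "X closure_of N \<subseteq> X closure_of (X interior_of (X closure_of N))"
    by (rule closure_of_mono)
  moreover have "X closure_of (X interior_of (X closure_of N)) \<subseteq> X closure_of N"
    by (metis closedin_closure_of closure_of_minimal interior_of_subset)
  ultimately show ?thesis
    unfolding regular_closed_in_def by blast
qed

lemma locally_compact_Hausdorff_compact_regular_closed_neighbourhood:
  assumes "locally_compact_space X" "Hausdorff_space X" "openin X W" "x \<in> W"
  obtains H where "compact_regular_closed_in X H" "x \<in> X interior_of H" "H \<subseteq> W"
proof -
  have "neighbourhood_base_of (\<lambda>C. compactin X C \<and> closedin X C) X"
    using assms(1,2) locally_compact_Hausdorff_imp_regular_space
      locally_compact_regular_space_neighbourhood_base by blast
  then obtain N V where NV: "openin X N" "compactin X V" "closedin X V"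
    "x \<in> N" "N \<subseteq> V" "V \<subseteq> W"
    using assms(3,4) unfolding neighbourhood_base_of by meson
  define H where "H = X closure_of N"
  have "H \<subseteq> V"
    unfolding H_def using NV closure_of_minimal by blast
  then have "compactin X H"
    unfolding H_def using NV(2) closed_compactin closedin_closure_of by blast
  moreover have "regular_closed_in X H"
    unfolding H_def using NV(1) by (rule regular_closed_in_closure_of_open)
  moreover have "N \<subseteq> X interior_of H"
    unfolding H_def using NV(1) by (meson closure_of_subset interior_of_maximal openin_subset)
  then have "x \<in> X interior_of H"
    using NV(4) by blast
  ultimately show thesis
    using that \<open>H \<subseteq> V\<close> NV(6) unfolding compact_regular_closed_in_def by blast
qed

lemma closure_of_preimage_interior_subset_preimage:
  assumes "continuous_map X' X f" "closedin X H"
  shows "X' closure_of {x \<in> topspace X'. f x \<in> X interior_of H} \<subseteq> {x \<in> topspace X'. f x \<in> H}"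
proof (rule closure_of_minimal)
  show "{x \<in> topspace X'. f x \<in> X interior_of H} \<subseteq> {x \<in> topspace X'. f x \<in> H}"
    using interior_of_subset by fast
  show "closedin X' {x \<in> topspace X'. f x \<in> H}"
    using assms by (rule closedin_continuous_map_preimage)
qed

lemma preimage_open_eq_Union_image_closure_preimage_interior:
  assumes "locally_compact_space X" "Hausdorff_space X"
    and "continuous_map X Y p" "continuous_map X' X f"
    and "p' ` topspace X' = topspace Y'"
    and "\<forall>x \<in> topspace X'. p (f x) = g (p' x)"
    and "openin Y U"
  shows "{y \<in> topspace Y'. g y \<in> U} =
         \<Union> {p' ` (X' closure_of {x \<in> topspace X'. f x \<in> X interior_of H}) | H.
              compact_regular_closed_in X H \<and> p ` H \<subseteq> U}" (is "?L = ?R")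
proof
  show "?L \<subseteq> ?R"
  proof
    fix y assume y: "y \<in> ?L"
    then have "y \<in> p' ` topspace X'"
      using assms(5) by simp
    then obtain x where x: "x \<in> topspace X'" "y = p' x"
      by blast
    have "f x \<in> topspace X"
      using x(1) assms(4) continuous_map_image_subset_topspace by blast
    then have "f x \<in> {z \<in> topspace X. p z \<in> U}"
      using y x assms(6) by simp
    moreover have "openin X {z \<in> topspace X. p z \<in> U}"
      using assms(3,7) by (rule openin_continuous_map_preimage)
    ultimately obtain H where H: "compact_regular_closed_in X H" "f x \<in> X interior_of H"
      "H \<subseteq> {z \<in> topspace X. p z \<in> U}"
      using locally_compact_Hausdorff_compact_regular_closed_neighbourhood[OF assms(1,2)] by blast
    have "x \<in> X' closure_of {x \<in> topspace X'. f x \<in> X interior_of H}"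
      using x H(2) closure_of_subset[of "{x \<in> topspace X'. f x \<in> X interior_of H}" X']
      by blast
    moreover have "p ` H \<subseteq> U"
      using H(3) by blast
    ultimately show "y \<in> ?R"
      using H(1) x(2) by blast
  qed
  show "?R \<subseteq> ?L"
  proof
    fix y assume "y \<in> ?R"
    then obtain H x where H: "compact_regular_closed_in X H" "p ` H \<subseteq> U"
      and x: "x \<in> X' closure_of {x \<in> topspace X'. f x \<in> X interior_of H}" and y: "y = p' x"
      by blast
    have "closedin X H"
      using H(1) unfolding compact_regular_closed_in_def regular_closed_in_def
      by (metis closedin_closure_of)
    then have "x \<in> topspace X'" "f x \<in> H"
      using x closure_of_preimage_interior_subset_preimage[OF assms(4)] by blast+
    then show "y \<in> ?L"
      using H(2) assms(5,6) y by auto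
  qed
qed

theorem lemma4p6:
  fixes X :: "'a topology" and Y :: "'b topology"
    and X' :: "'c topology" and Y' :: "'d topology"
    and p :: "'a \<Rightarrow> 'b" and f :: "'c \<Rightarrow> 'a" and g :: "'d \<Rightarrow> 'b" and p' :: "'c \<Rightarrow> 'd"
  assumes "locally_compact_space X" and "Hausdorff_space X"
    and "locally_compact_space Y" and "Hausdorff_space Y"
    and "perfect_map X Y p" and "irreducible_map X Y p"
    and "continuous_map X' X f" and "continuous_map Y' Y g"
    and "closed_map X' Y' p'" and "irreducible_map X' Y' p'"
    and "\<forall>x \<in> topspace X'. p (f x) = g (p' x)"
    and "regular_closed_in X G"
  shows "Y' closure_of {y \<in> topspace Y'. g y \<in> Y interior_of (p ` G)} =
         Y' closure_of (\<Union> {p' ` (X' closure_of {x \<in> topspace X'. f x \<in> X interior_of H}) | H.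
                              compact_regular_closed_in X H \<and> p ` H \<subseteq> Y interior_of (p ` G)})"
proof -
  have p: "continuous_map X Y p"
    using assms(5) unfolding perfect_map_def by blast
  have p': "p' ` topspace X' = topspace Y'"
    using assms(10) unfolding irreducible_map_def by blast
  have "{y \<in> topspace Y'. g y \<in> Y interior_of (p ` G)} =
      \<Union> {p' ` (X' closure_of {x \<in> topspace X'. f x \<in> X interior_of H}) | H.
           compact_regular_closed_in X H \<and> p ` H \<subseteq> Y interior_of (p ` G)}"
    using preimage_open_eq_Union_image_closure_preimage_interior
      [OF assms(1,2) p assms(7) p' assms(11) openin_interior_of] .
  then show ?thesis
    by simp
qed

end
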